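(* Let $r\ge2$, $n\ge2r$, and let $H\subseteq\binom{\Omega_n}{r}$ be $M_1^{(r)}$-saturated. Then: (1) every vertex of $\Omega_n$ lies in some edge of $H$ (so $\lambda(v_i),\rho(v_i)$ are defined for all $i$); (2) for all $i$, $\lambda(v_i)\notin[v_{i-r+2},v_{i+r-1}]$ and $\rho(v_i)\notin[v_{i-r+1},v_{i+r-2}]$; (3) for all $i$, $\rho(v_i)\in(v_i,\lambda(v_i)]$, i.e. going clockwise from $v_i$ one reaches $\rho(v_i)$ no later than $\lambda(v_i)$ (possibly $\rho(v_i)=\lambda(v_i)$), and both differ from $v_i$; (4) for all $i$, if $v_j\in[\rho(v_i),\lambda(v_i)]$ then every $e\in\binom{\Omega_n}{r}$ with $\{v_i,v_j\}\subseteq e$ belongs to $H$.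
   Context: $\Omega_n=\{v_0,\dots,v_{n-1}\}$ with cyclic order $v_0<\dots<v_{n-1}<v_0$, indices mod $n$. For distinct vertices $u,w$, $(u,w)$ is the set of vertices strictly between $u$ and $w$ moving clockwise from $u$ to $w$; $[u,w]=(u,w)\cup\{u,w\}$, $(u,w]=(u,w)\cup\{w\}$, $[u,w)=(u,w)\cup\{u\}$. An $r$-cgh $H\subseteq\binom{\Omega_n}{r}$ is $M_1^{(r)}$-saturated if there are no edges $h_1,h_2\in H$ and vertices $u\neq u'$ with $h_1\subseteq[u,u']$ and $h_2\cap[u,u']=\emptyset$, but for every $e\in\binom{\Omega_n}{r}\setminus H$ such a pair exists in $H\cup\{e\}$. For a vertex $v_i$ lying in some edge of $H$: $\lambda(v_i)$ is the vertex $u$ such that some $h\in H$ with $v_i\in h$ satisfies $h\subseteq[u,v_i]$, while no $h\in H$ with $v_i\in h$ satisfies $h\subseteq[u',v_i]$ where $u'$ is the clockwise successor of $u$ (i.e. $[u,v_i]$ is the shortest counterclockwise-ending arc at $v_i$ containing an edge through $v_i$). Symmetrically, $\rho(v_i)$ is the vertex $u$ such that some $h\in H$ with $v_i\in h$ satisfies $h\subseteq[v_i,u]$ but no such edge lies in $[v_i,u'']$ with $u''$ the clockwise predecessor of $u$. *)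

theory Defs
  imports Main
begin

text \<open>Vertices of Omega_n are represented by the indices 0..<n (v_i = i), with
cyclic (clockwise) order 0 < 1 < ... < n-1 < 0.  Edges are sets of indices.\<close>

text \<open>Closed clockwise arc [u,w] from u to w (u, w < n).\<close>
definition carc :: "nat \<Rightarrow> nat \<Rightarrow> nat \<Rightarrow> nat set" where
  "carc n u w = {(u + k) mod n | k. k \<le> (w + n - u) mod n}"

definition ocarc :: "nat \<Rightarrow> nat \<Rightarrow> nat \<Rightarrow> nat set" where
  "ocarc n u w = carc n u w - {u}"

definition r_sets :: "nat \<Rightarrow> nat \<Rightarrow> nat set set" where
  "r_sets n r = {e. e \<subseteq> {..<n} \<and> card e = r}"

definition has_M1 :: "nat \<Rightarrow> nat set set \<Rightarrow> bool" where
  "has_M1 n H \<longleftrightarrow> (\<exists>h1\<in>H. \<exists>h2\<in>H. \<exists>u<n. \<exists>u'<n. u \<noteq> u' \<and>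
      h1 \<subseteq> carc n u u' \<and> h2 \<inter> carc n u u' = {})"

definition M1_saturated :: "nat \<Rightarrow> nat \<Rightarrow> nat set set \<Rightarrow> bool" where
  "M1_saturated n r H \<longleftrightarrow> H \<subseteq> r_sets n r \<and> \<not> has_M1 n H \<and>
      (\<forall>e \<in> r_sets n r - H. has_M1 n (insert e H))"

text \<open>lambda(v): shortest arc [u,v] containing an edge through v.\<close>
definition lam :: "nat \<Rightarrow> nat set set \<Rightarrow> nat \<Rightarrow> nat" where
  "lam n H v = (THE u. u < n \<and> (\<exists>h\<in>H. v \<in> h \<and> h \<subseteq> carc n u v) \<and>
      \<not> (\<exists>h\<in>H. v \<in> h \<and> h \<subseteq> carc n ((u + 1) mod n) v))"

text \<open>rho(v): shortest arc [v,u] containing an edge through v.\<close>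
definition rho :: "nat \<Rightarrow> nat set set \<Rightarrow> nat \<Rightarrow> nat" where
  "rho n H v = (THE u. u < n \<and> (\<exists>h\<in>H. v \<in> h \<and> h \<subseteq> carc n v u) \<and>
      \<not> (\<exists>h\<in>H. v \<in> h \<and> h \<subseteq> carc n v ((u + n - 1) mod n)))"

end

theory Submission
  imports Defs
begin

text \<open>
  Measure positions clockwise from a fixed vertex v_i. As H contains no M_1, the least position
  of any edge is at most the largest position of any other edge, so (Helly in dimension one)
  some position t with r \<le> t \<le> n - r lies between the least and the largest position of
  every edge avoiding v_i. Saturation then makes every r-set consisting of v_i and r - 1 vertices,
  one of them at such a position, an edge: the M_1 it would create needs an arc that contains
  v_i and that vertex but misses an edge straddling it, or the reverse, and arcs cannot do this.
  Windows of r - 1 consecutive positions next to t give edges through v_i on both sides of t,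
  so \<rho>(v_i) and \<lambda>(v_i) lie on opposite sides of t, and counting positions bounds their
  distance from v_i. Finally every position between \<rho>(v_i) and \<lambda>(v_i) is again such a
  position, for otherwise the edges realising \<lambda>(v_i) and \<rho>(v_i) would form an M_1 with an
  edge lying entirely on one side.
\<close>

section \<open>Clockwise distance and arcs\<close>

definition cw_dist :: "nat \<Rightarrow> nat \<Rightarrow> nat \<Rightarrow> nat" where
  "cw_dist n u y = (y + n - u) mod n"

lemma cw_dist_less: "0 < n \<Longrightarrow> cw_dist n u y < n"
  by (simp add: cw_dist_def)

lemma cw_dist_eq_if: "u < n \<Longrightarrow> y < n \<Longrightarrow> cw_dist n u y = (if u \<le> y then y - u else y + n - u)"
  unfolding cw_dist_def
  by (cases "u \<le> y") (simp_all add: le_mod_geq)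

lemma cw_dist_self: "cw_dist n u u = 0"
  by (simp add: cw_dist_def)

lemma cw_dist_eq_0_iff: "u < n \<Longrightarrow> y < n \<Longrightarrow> cw_dist n u y = 0 \<longleftrightarrow> y = u"
  by (auto simp: cw_dist_eq_if)

lemma cw_dist_mod_add: "i < n \<Longrightarrow> u < n \<Longrightarrow> cw_dist n i ((u + k) mod n) = (cw_dist n i u + k) mod n"
proof -
  assume "i < n"
  then have "cw_dist n i ((u + k) mod n) = ((u + k) mod n + (n - i)) mod n"
    by (simp add: cw_dist_def)
  also have "\<dots> = (u + (n - i) + k) mod n"
    by (metis mod_add_left_eq add.assoc add.commute)
  also have "\<dots> = (cw_dist n i u + k) mod n"
    using \<open>i < n\<close> by (simp add: cw_dist_def mod_add_left_eq)
  finally show ?thesis .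
qed

lemma cw_dist_shift: "u < n \<Longrightarrow> cw_dist n u ((u + k) mod n) = k mod n"
  using cw_dist_mod_add[of u n u k] by (simp add: cw_dist_self)

lemma add_cw_dist_mod: "u < n \<Longrightarrow> y < n \<Longrightarrow> (u + cw_dist n u y) mod n = y"
  by (cases "u \<le> y") (simp_all add: cw_dist_eq_if le_mod_geq)

lemma cw_dist_rotate:
  "i < n \<Longrightarrow> u < n \<Longrightarrow> y < n \<Longrightarrow> cw_dist n (cw_dist n i u) (cw_dist n i y) = cw_dist n u y"
proof -
  assume "i < n" "u < n" "y < n"
  then have "cw_dist n (cw_dist n i u) (cw_dist n i y) =
      (if cw_dist n i u \<le> cw_dist n i y then cw_dist n i y - cw_dist n i u
       else cw_dist n i y + n - cw_dist n i u)"
    by (intro cw_dist_eq_if cw_dist_less) auto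
  then show ?thesis
    using \<open>i < n\<close> \<open>u < n\<close> \<open>y < n\<close> by (simp add: cw_dist_eq_if split: if_splits)
qed

lemma carc_less: "0 < n \<Longrightarrow> y \<in> carc n u w \<Longrightarrow> y < n"
  by (auto simp: carc_def)

lemma mem_carc_iff: "u < n \<Longrightarrow> y \<in> carc n u w \<longleftrightarrow> y < n \<and> cw_dist n u y \<le> cw_dist n u w"
proof
  assume "u < n" "y \<in> carc n u w"
  then obtain k where k: "y = (u + k) mod n" "k \<le> cw_dist n u w"
    by (auto simp: carc_def cw_dist_def)
  moreover have "k < n"
    using k(2) cw_dist_less[of n u w] \<open>u < n\<close> by linarith
  ultimately show "y < n \<and> cw_dist n u y \<le> cw_dist n u w"
    using \<open>u < n\<close> by (simp add: cw_dist_shift)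
next
  assume "u < n" "y < n \<and> cw_dist n u y \<le> cw_dist n u w"
  then have "y = (u + cw_dist n u y) mod n"
    by (simp add: add_cw_dist_mod)
  then show "y \<in> carc n u w"
    using \<open>y < n \<and> cw_dist n u y \<le> cw_dist n u w\<close> unfolding carc_def cw_dist_def by blast
qed

lemma mem_carc_rotate:
  assumes "i < n" "u < n" "w < n"
  shows "y \<in> carc n u w \<longleftrightarrow>
    y < n \<and> cw_dist n (cw_dist n i u) (cw_dist n i y) \<le> cw_dist n (cw_dist n i u) (cw_dist n i w)"
  using assms mem_carc_iff[of u n y w] cw_dist_rotate[of i n u] by auto

lemma mem_carc_shifted:
  assumes "i < n" "y < n"
  shows "y \<in> carc n ((i + a) mod n) ((i + b) mod n) \<longleftrightarrow>
    cw_dist n (a mod n) (cw_dist n i y) \<le> cw_dist n (a mod n) (b mod n)"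
  using assms mem_carc_rotate[of i n "(i + a) mod n" "(i + b) mod n" y]
  by (simp add: cw_dist_shift)

lemma mem_carc_between:
  assumes "i < n" "m \<le> M" "M < n"
  shows "y \<in> carc n ((i + m) mod n) ((i + M) mod n) \<longleftrightarrow>
    y < n \<and> m \<le> cw_dist n i y \<and> cw_dist n i y \<le> M"
proof (cases "y < n")
  case True
  then show ?thesis
    using assms mem_carc_shifted[of i n y m M] cw_dist_less[of n i y]
    by (auto simp: cw_dist_eq_if)
qed (use assms carc_less in force)

lemma mem_carc_to:
  assumes "i < n" "1 \<le> t" "t < n"
  shows "y \<in> carc n ((i + t) mod n) i \<longleftrightarrow> y < n \<and> (y = i \<or> t \<le> cw_dist n i y)"
proof (cases "y < n")
  case True
  then show ?thesis
    using assms mem_carc_shifted[of i n y t 0] cw_dist_less[of n i y] cw_dist_eq_0_iff[of i n y]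
    by (auto simp: cw_dist_eq_if)
qed (use assms carc_less in force)

lemma mem_carc_around:
  assumes "i < n" "a + b < n"
  shows "y \<in> carc n ((i + n - a) mod n) ((i + b) mod n) \<longleftrightarrow>
    y < n \<and> (cw_dist n i y \<le> b \<or> n - a \<le> cw_dist n i y)"
proof (cases "y < n")
  case True
  have "i + n - a = i + (n - a)"
    using assms by simp
  then show ?thesis
    using assms True mem_carc_shifted[of i n y "n - a" b] cw_dist_less[of n i y]
    by (cases "a = 0") (auto simp: cw_dist_eq_if)
qed (use assms carc_less in force)

lemma cw_dist_interval_convex:
  assumes "s < n" "z < n" "y \<le> x" "x \<le> z"
    and "cw_dist n s y \<le> d" "cw_dist n s z \<le> d" "\<not> cw_dist n s 0 \<le> d"
  shows "cw_dist n s x \<le> d"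
  using assms by (simp add: cw_dist_eq_if split: if_splits)

lemma cw_dist_interval_compl_convex:
  assumes "s < n" "z < n" "y \<le> x" "x \<le> z"
    and "\<not> cw_dist n s y \<le> d" "\<not> cw_dist n s z \<le> d" "cw_dist n s 0 \<le> d"
  shows "\<not> cw_dist n s x \<le> d"
  using assms by (simp add: cw_dist_eq_if split: if_splits)

lemma carc_convex:
  assumes "i < n" "u < n" "w < n" "x < n"
    and "y \<in> carc n u w" "z \<in> carc n u w" "i \<notin> carc n u w"
    and "cw_dist n i y \<le> cw_dist n i x" "cw_dist n i x \<le> cw_dist n i z"
  shows "x \<in> carc n u w"
proof -
  have "y < n" "z < n"
    using assms carc_less by auto
  then show ?thesis
    using assms mem_carc_rotate[OF assms(1-3)] cw_dist_self[of n i]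
      cw_dist_interval_convex[OF cw_dist_less cw_dist_less assms(8,9)]
    by auto
qed

lemma carc_compl_convex:
  assumes "i < n" "u < n" "w < n" "y < n" "z < n"
    and "y \<notin> carc n u w" "z \<notin> carc n u w" "i \<in> carc n u w"
    and "cw_dist n i y \<le> cw_dist n i x" "cw_dist n i x \<le> cw_dist n i z"
  shows "x \<notin> carc n u w"
  using assms mem_carc_rotate[OF assms(1-3)] cw_dist_self[of n i]
    cw_dist_interval_compl_convex[OF cw_dist_less cw_dist_less assms(9,10)]
  by auto

lemma The_last_in_cw_range:
  assumes "i < n" "1 \<le> L" "L < n"
    and P: "\<And>u. u < n \<Longrightarrow> P u \<longleftrightarrow> 1 \<le> cw_dist n i u \<and> cw_dist n i u \<le> L"
  shows "(THE u. u < n \<and> P u \<and> \<not> P ((u + 1) mod n)) = (i + L) mod n"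
proof (rule the_equality)
  have "cw_dist n i ((i + L) mod n) = L"
    using assms by (simp add: cw_dist_shift)
  moreover have "cw_dist n i (((i + L) mod n + 1) mod n) = (L + 1) mod n"
    using assms cw_dist_mod_add[of i n "(i + L) mod n" 1] by (simp add: cw_dist_shift)
  moreover have "(L + 1) mod n = 0 \<or> L < (L + 1) mod n"
    using \<open>L < n\<close> by (cases "L + 1 = n") auto
  ultimately show "(i + L) mod n < n \<and> P ((i + L) mod n) \<and> \<not> P (((i + L) mod n + 1) mod n)"
    using assms by auto
next
  fix u
  assume u: "u < n \<and> P u \<and> \<not> P ((u + 1) mod n)"
  then have range: "1 \<le> cw_dist n i u" "cw_dist n i u \<le> L"
    using P by auto
  have "\<not> cw_dist n i u < L"
  proof
    assume "cw_dist n i u < L"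
    then have "cw_dist n i ((u + 1) mod n) = cw_dist n i u + 1"
      using assms u cw_dist_mod_add[of i n u 1] by simp
    moreover have "(u + 1) mod n < n"
      using u by simp
    ultimately show False
      using u P[of "(u + 1) mod n"] \<open>cw_dist n i u < L\<close> by simp
  qed
  then show "u = (i + L) mod n"
    using range u \<open>i < n\<close> add_cw_dist_mod[of i n u] by simp
qed

lemma The_first_in_cw_range:
  assumes "i < n" "1 \<le> R" "R < n"
    and P: "\<And>u. u < n \<Longrightarrow> P u \<longleftrightarrow> R \<le> cw_dist n i u"
  shows "(THE u. u < n \<and> P u \<and> \<not> P ((u + n - 1) mod n)) = (i + R) mod n"
proof -
  have pred: "cw_dist n i ((u + n - 1) mod n) = cw_dist n i u - 1"
    if "u < n" "1 \<le> cw_dist n i u" for u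
  proof -
    have "cw_dist n i ((u + n - 1) mod n) = (cw_dist n i u + (n - 1)) mod n"
      using assms that cw_dist_mod_add[of i n u "n - 1"] by (simp add: add_diff_assoc)
    also have "\<dots> = (cw_dist n i u - 1 + n) mod n"
      using that by (intro arg_cong[where f = "\<lambda>x. x mod n"]) arith
    also have "\<dots> = cw_dist n i u - 1"
      using cw_dist_less[of n i u] that by (simp add: le_mod_geq)
    finally show ?thesis .
  qed
  show ?thesis
  proof (rule the_equality)
    show "(i + R) mod n < n \<and> P ((i + R) mod n) \<and> \<not> P (((i + R) mod n + n - 1) mod n)"
      using assms pred[of "(i + R) mod n"] by (simp add: cw_dist_shift)
  next
    fix u
    assume u: "u < n \<and> P u \<and> \<not> P ((u + n - 1) mod n)"
    then have "R \<le> cw_dist n i u" "\<not> R < cw_dist n i u"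
      using P pred[of u] assms by auto
    then show "u = (i + R) mod n"
      using u \<open>i < n\<close> add_cw_dist_mod[of i n u] by simp
  qed
qed

section \<open>A saturated hypergraph seen from one vertex\<close>

locale saturated_vertex =
  fixes n r :: nat and H :: "nat set set" and i :: nat
  assumes r_ge_2: "2 \<le> r" and n_ge: "2 * r \<le> n" and saturated: "M1_saturated n r H"
    and i_less: "i < n"
begin

abbreviation pos :: "nat \<Rightarrow> nat" where
  "pos y \<equiv> cw_dist n i y"

lemma pos_less: "pos y < n"
  using i_less by (simp add: cw_dist_less)

lemma pos_eq_0_iff: "y < n \<Longrightarrow> pos y = 0 \<longleftrightarrow> y = i"
  using i_less by (rule cw_dist_eq_0_iff)

lemma pos_shift: "pos ((i + t) mod n) = t mod n"
  using i_less by (rule cw_dist_shift)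

lemma edge_subset: "h \<in> H \<Longrightarrow> h \<subseteq> {..<n}"
  using saturated by (auto simp: M1_saturated_def r_sets_def)

lemma card_edge: "h \<in> H \<Longrightarrow> card h = r"
  using saturated by (auto simp: M1_saturated_def r_sets_def)

lemma finite_edge: "h \<in> H \<Longrightarrow> finite h"
  using edge_subset finite_subset by blast

lemma edge_nonempty: "h \<in> H \<Longrightarrow> h \<noteq> {}"
  using card_edge r_ge_2 by fastforce

lemma no_M1:
  "h1 \<in> H \<Longrightarrow> h2 \<in> H \<Longrightarrow> u < n \<Longrightarrow> u' < n \<Longrightarrow> u \<noteq> u' \<Longrightarrow>
    h1 \<subseteq> carc n u u' \<Longrightarrow> h2 \<inter> carc n u u' = {} \<Longrightarrow> False"
  using saturated unfolding M1_saturated_def has_M1_def by blast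

lemma insert_has_M1: "e \<in> r_sets n r \<Longrightarrow> e \<notin> H \<Longrightarrow> has_M1 n (insert e H)"
  using saturated unfolding M1_saturated_def by blast

lemma r_le_card_if_image_pos_subset:
  assumes "h \<in> H" "pos ` h \<subseteq> S" "finite S"
  shows "r \<le> card S"
proof -
  have "inj_on pos h"
    using edge_subset[OF assms(1)] i_less add_cw_dist_mod[of i n]
    by (metis inj_onI lessThan_iff subsetD)
  then have "card (pos ` h) = r"
    using card_edge[OF assms(1)] by (simp add: card_image)
  then show ?thesis
    using card_mono[OF assms(3,2)] by simp
qed

lemma subset_carc_from_iff: "h \<in> H \<Longrightarrow> w < n \<Longrightarrow> h \<subseteq> carc n i w \<longleftrightarrow> (\<forall>y\<in>h. pos y \<le> pos w)"
  using edge_subset[of h] i_less by (auto simp: mem_carc_iff)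

lemma subset_carc_to_iff:
  "h \<in> H \<Longrightarrow> 1 \<le> t \<Longrightarrow> t < n \<Longrightarrow> h \<subseteq> carc n ((i + t) mod n) i \<longleftrightarrow> (\<forall>y\<in>h. y = i \<or> t \<le> pos y)"
  using edge_subset[of h] i_less by (auto simp: mem_carc_to)

lemma edges_overlap:
  assumes "g \<in> H" "g' \<in> H"
  shows "\<exists>a\<in>g. \<exists>b\<in>g'. pos a \<le> pos b"
proof (rule ccontr)
  assume "\<not> ?thesis"
  then have below: "pos b < pos a" if "a \<in> g" "b \<in> g'" for a b
    using that by force
  define m where "m = Min (pos ` g)"
  define M where "M = Max (pos ` g)"
  have fin: "finite (pos ` g)" and ne: "pos ` g \<noteq> {}"
    using finite_edge edge_nonempty assms(1) by auto
  have range: "m \<le> pos y" "pos y \<le> M" if "y \<in> g" for y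
    using that fin by (auto simp: m_def M_def)
  have "m \<noteq> M"
  proof
    assume "m = M"
    then have "pos y = m" if "y \<in> g" for y
      using range[OF that] by simp
    then have "pos ` g \<subseteq> {m}"
      by blast
    then have "r \<le> card {m}"
      using r_le_card_if_image_pos_subset[OF assms(1)] by blast
    then show False
      using r_ge_2 by simp
  qed
  moreover have "m \<le> M" "M < n"
    using range ne pos_less Max_in[OF fin ne] by (auto simp: M_def)
  moreover have "pos ((i + m) mod n) = m" "pos ((i + M) mod n) = M"
    using pos_shift \<open>m \<le> M\<close> \<open>M < n\<close> by simp_all
  ultimately have ends: "(i + m) mod n \<noteq> (i + M) mod n"
    by metis
  have "g \<subseteq> carc n ((i + m) mod n) ((i + M) mod n)"
    using range edge_subset[OF assms(1)] \<open>m \<le> M\<close> \<open>M < n\<close> i_less by (auto simp: mem_carc_between)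
  moreover have "g' \<inter> carc n ((i + m) mod n) ((i + M) mod n) = {}"
  proof -
    obtain a where "a \<in> g" "pos a = m"
      using Min_in[OF fin ne] by (auto simp: m_def)
    then show ?thesis
      using below \<open>m \<le> M\<close> \<open>M < n\<close> i_less mem_carc_between[of i n m M] by fastforce
  qed
  ultimately show False
    using no_M1[OF assms _ _ ends] i_less by simp
qed

definition pierces :: "nat \<Rightarrow> bool" where
  "pierces t \<longleftrightarrow> (\<forall>g\<in>H. i \<notin> g \<longrightarrow> (\<exists>a\<in>g. pos a \<le> t) \<and> (\<exists>b\<in>g. t \<le> pos b))"

lemma edge_avoiding_has_far_vertex:
  assumes "g \<in> H" "i \<notin> g"
  shows "\<exists>b\<in>g. r \<le> pos b"
proof (rule ccontr)
  assume "\<not> ?thesis"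
  then have "pos ` g \<subseteq> {1..<r}"
    using assms edge_subset[of g] pos_eq_0_iff by fastforce
  then have "r \<le> card {1..<r}"
    using r_le_card_if_image_pos_subset[OF assms(1)] by blast
  then show False
    using r_ge_2 by simp
qed

lemma Min_pos_edge_le: "g \<in> H \<Longrightarrow> Min (pos ` g) \<le> n - r"
proof -
  assume g: "g \<in> H"
  have "pos ` g \<subseteq> {Min (pos ` g)..<n}"
    using finite_edge[OF g] pos_less by auto
  then have "r \<le> card {Min (pos ` g)..<n}"
    using r_le_card_if_image_pos_subset[OF g] by blast
  moreover obtain y where "y \<in> g"
    using edge_nonempty[OF g] by blast
  then have "Min (pos ` g) \<le> pos y"
    using finite_edge[OF g] by simp
  then have "Min (pos ` g) < n"
    using pos_less[of y] by linarith
  ultimately show ?thesis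
    by simp
qed

lemma pierces_exists: "\<exists>t. r \<le> t \<and> t \<le> n - r \<and> pierces t"
proof -
  define T where "T = insert r ((\<lambda>g. Min (pos ` g)) ` {g \<in> H. i \<notin> g})"
  have "H \<subseteq> Pow {..<n}"
    using edge_subset by blast
  then have "finite H"
    by (rule finite_subset) simp
  then have fin: "finite T"
    by (simp add: T_def)
  define t where "t = Max T"
  have t_in: "t \<in> T"
    unfolding t_def using Max_in[OF fin] by (simp add: T_def)
  have t_ge: "\<And>s. s \<in> T \<Longrightarrow> s \<le> t"
    unfolding t_def using fin by simp
  have "r \<le> t"
    using t_ge by (simp add: T_def)
  moreover have "t \<le> n - r"
    using t_in n_ge Min_pos_edge_le by (auto simp: T_def)
  moreover have "pierces t"
    unfolding pierces_def
  proof (intro ballI impI conjI)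
    fix g assume g: "g \<in> H" "i \<notin> g"
    have "Min (pos ` g) \<in> pos ` g"
      using finite_edge[OF g(1)] edge_nonempty[OF g(1)] by simp
    moreover have "Min (pos ` g) \<le> t"
      using t_ge g by (simp add: T_def)
    ultimately show "\<exists>a\<in>g. pos a \<le> t"
      by force
    show "\<exists>b\<in>g. t \<le> pos b"
    proof (cases "t = r")
      case True
      then show ?thesis
        using edge_avoiding_has_far_vertex[OF g] by simp
    next
      case False
      then obtain g' where g': "g' \<in> H" "t = Min (pos ` g')"
        using t_in by (auto simp: T_def)
      obtain a b where "a \<in> g'" "b \<in> g" "pos a \<le> pos b"
        using edges_overlap[OF g'(1) g(1)] by blast
      then show ?thesis
        using g' finite_edge[OF g'(1)] by (metis Min_le finite_imageI imageI order.trans)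
    qed
  qed
  ultimately show ?thesis
    by blast
qed

lemma insert_in_H_if_pierces:
  assumes E: "E \<subseteq> {..<n}" "i \<notin> E" "card E = r - 1" and x: "x \<in> E"
    and pierce: "pierces (pos x)"
  shows "insert i E \<in> H"
proof (rule ccontr)
  let ?e = "insert i E"
  assume "?e \<notin> H"
  moreover have "finite E"
    using E(1) finite_subset by blast
  then have "card ?e = r"
    using E(2,3) r_ge_2 by simp
  then have "?e \<in> r_sets n r"
    using E(1) i_less unfolding r_sets_def by blast
  ultimately have "has_M1 n (insert ?e H)"
    by (intro insert_has_M1)
  then obtain h1 h2 u u' where h: "h1 \<in> insert ?e H" "h2 \<in> insert ?e H"
      and u: "u < n" "u' < n" "u \<noteq> u'"
      and C: "h1 \<subseteq> carc n u u'" "h2 \<inter> carc n u u' = {}"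
    unfolding has_M1_def by blast
  have "x < n"
    using E(1) x by blast
  show False
  proof (cases "h1 = ?e")
    case True
    then have "i \<in> carc n u u'" "x \<in> carc n u u'"
      using C(1) x by auto
    then have "h2 \<in> H" "i \<notin> h2"
      using h(2) C(2) by auto
    then obtain a b where ab: "a \<in> h2" "b \<in> h2" "pos a \<le> pos x" "pos x \<le> pos b"
      using pierce unfolding pierces_def by blast
    then have "a \<notin> carc n u u'" "b \<notin> carc n u u'" "a < n" "b < n"
      using C(2) edge_subset[OF \<open>h2 \<in> H\<close>] by auto
    then show False
      using carc_compl_convex[OF i_less u(1,2)] ab \<open>i \<in> carc n u u'\<close> \<open>x \<in> carc n u u'\<close> by blast
  next
    case False
    then have "h1 \<in> H"
      using h(1) by simp
    then have "h2 = ?e"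
      using no_M1[OF _ _ u C] h(2) by blast
    then have "i \<notin> carc n u u'" "x \<notin> carc n u u'" "i \<notin> h1"
      using C x by auto
    then obtain a b where ab: "a \<in> h1" "b \<in> h1" "pos a \<le> pos x" "pos x \<le> pos b"
      using pierce \<open>h1 \<in> H\<close> unfolding pierces_def by blast
    then show False
      using carc_convex[OF i_less u(1,2) \<open>x < n\<close>] C(1) \<open>i \<notin> carc n u u'\<close> \<open>x \<notin> carc n u u'\<close>
      by blast
  qed
qed

lemma edge_in_window:
  assumes "1 \<le> lo" "lo \<le> t" "t \<le> hi" "hi < n" "lo + r \<le> hi + 2" and "pierces t"
  shows "\<exists>h\<in>H. i \<in> h \<and> (\<forall>y\<in>h. y = i \<or> lo \<le> pos y \<and> pos y \<le> hi)"
proof -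
  define a where "a = min t (hi + 2 - r)"
  let ?S = "{a..<a + r - 1}"
  have S: "?S \<subseteq> {lo..hi}" "t \<in> ?S"
    using assms r_ge_2 by (auto simp: a_def)
  have pos_S: "pos ((i + s) mod n) = s" if "s \<in> ?S" for s
    using S(1) that assms(4) pos_shift by auto
  define E where "E = (\<lambda>s. (i + s) mod n) ` ?S"
  have "inj_on (\<lambda>s. (i + s) mod n) ?S"
    by (rule inj_on_inverseI[where g = pos]) (rule pos_S)
  then have "card E = r - 1"
    by (simp add: E_def card_image)
  moreover have "E \<subseteq> {..<n}"
    using i_less by (auto simp: E_def)
  moreover have "i \<notin> E"
    using S(1) pos_S assms(1) cw_dist_self[of n i] by (force simp: E_def)
  moreover have "(i + t) mod n \<in> E" "pos ((i + t) mod n) = t"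
    using S(2) pos_S by (auto simp: E_def)
  ultimately have "insert i E \<in> H"
    using insert_in_H_if_pierces \<open>pierces t\<close> by metis
  moreover have "lo \<le> pos y \<and> pos y \<le> hi" if "y \<in> E" for y
    using that S(1) pos_S by (force simp: E_def)
  ultimately show ?thesis
    by blast
qed

definition edge_in_left_arc :: "nat \<Rightarrow> bool" where
  "edge_in_left_arc t \<longleftrightarrow> (\<exists>h\<in>H. i \<in> h \<and> (\<forall>y\<in>h. y = i \<or> t \<le> pos y))"

definition edge_in_right_arc :: "nat \<Rightarrow> bool" where
  "edge_in_right_arc t \<longleftrightarrow> (\<exists>h\<in>H. i \<in> h \<and> (\<forall>y\<in>h. pos y \<le> t))"

lemma edge_in_left_arc_mono: "edge_in_left_arc t \<Longrightarrow> s \<le> t \<Longrightarrow> edge_in_left_arc s"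
  unfolding edge_in_left_arc_def by (meson order_trans)

lemma edge_in_right_arc_mono: "edge_in_right_arc t \<Longrightarrow> t \<le> s \<Longrightarrow> edge_in_right_arc s"
  unfolding edge_in_right_arc_def by (meson order_trans)

lemma edge_in_left_arc_bound:
  assumes "edge_in_left_arc t" "1 \<le> t"
  shows "t + r \<le> n + 1"
proof -
  obtain h where h: "h \<in> H" "\<forall>y\<in>h. y = i \<or> t \<le> pos y"
    using assms(1) unfolding edge_in_left_arc_def by blast
  then have "pos ` h \<subseteq> insert 0 {t..<n}"
    using pos_less cw_dist_self[of n i] by auto
  then have "r \<le> card (insert 0 {t..<n})"
    using r_le_card_if_image_pos_subset[OF h(1)] by blast
  also have "\<dots> = n - t + 1"
    using assms(2) by simp
  finally show ?thesis
    using r_ge_2 by linarith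
qed

lemma edge_in_right_arc_bound: "edge_in_right_arc t \<Longrightarrow> r \<le> t + 1"
proof -
  assume "edge_in_right_arc t"
  then obtain h where h: "h \<in> H" "\<forall>y\<in>h. pos y \<le> t"
    unfolding edge_in_right_arc_def by blast
  then have "pos ` h \<subseteq> {..t}"
    by auto
  then have "r \<le> card {..t}"
    using r_le_card_if_image_pos_subset[OF h(1)] by blast
  then show ?thesis
    by simp
qed

lemma edges_in_arcs_if_pierces:
  assumes "r \<le> t" "t \<le> n - r" "pierces t"
  shows "edge_in_left_arc t" "edge_in_right_arc t"
proof -
  have "1 \<le> t" "t \<le> n - 1" "t + r \<le> n - 1 + 2" "n - 1 < n"
    using assms(1,2) r_ge_2 by linarith+
  then obtain h where "h \<in> H" "i \<in> h" "\<forall>y\<in>h. y = i \<or> t \<le> pos y \<and> pos y \<le> n - 1"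
    using edge_in_window[of t t "n - 1"] assms(3) by auto
  then show "edge_in_left_arc t"
    unfolding edge_in_left_arc_def by blast
  have "t < n" "1 + r \<le> t + 2"
    using assms(1,2) r_ge_2 by linarith+
  then obtain h where h: "h \<in> H" "i \<in> h" "\<forall>y\<in>h. y = i \<or> 1 \<le> pos y \<and> pos y \<le> t"
    using edge_in_window[of 1 t t] assms(3) \<open>1 \<le> t\<close> by auto
  then have "\<forall>y\<in>h. pos y \<le> t"
    using cw_dist_self[of n i] by auto
  then show "edge_in_right_arc t"
    unfolding edge_in_right_arc_def using h(1,2) by blast
qed

definition lam_pos :: nat where
  "lam_pos = Max {t. t < n \<and> edge_in_left_arc t}"

definition rho_pos :: nat where
  "rho_pos = Min {t. t < n \<and> edge_in_right_arc t}"

lemma edges_in_both_arcs: "\<exists>t. r \<le> t \<and> t \<le> n - r \<and> edge_in_left_arc t \<and> edge_in_right_arc t"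
  using pierces_exists edges_in_arcs_if_pierces by blast

lemma edge_in_left_arc_lam_pos: "edge_in_left_arc lam_pos"
proof -
  obtain t where "r \<le> t" "t \<le> n - r" "edge_in_left_arc t"
    using edges_in_both_arcs by blast
  then have "t \<in> {t. t < n \<and> edge_in_left_arc t}"
    using r_ge_2 by simp
  then have "lam_pos \<in> {t. t < n \<and> edge_in_left_arc t}"
    unfolding lam_pos_def by (intro Max_in) auto
  then show ?thesis
    by simp
qed

lemma edge_in_right_arc_rho_pos: "edge_in_right_arc rho_pos"
proof -
  obtain t where "r \<le> t" "t \<le> n - r" "edge_in_right_arc t"
    using edges_in_both_arcs by blast
  then have "t \<in> {t. t < n \<and> edge_in_right_arc t}"
    using r_ge_2 by simp
  then have "rho_pos \<in> {t. t < n \<and> edge_in_right_arc t}"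
    unfolding rho_pos_def by (intro Min_in) auto
  then show ?thesis
    by simp
qed

lemma edge_in_left_arc_iff: "t < n \<Longrightarrow> edge_in_left_arc t \<longleftrightarrow> t \<le> lam_pos"
proof
  assume "t < n" "edge_in_left_arc t"
  then show "t \<le> lam_pos"
    unfolding lam_pos_def by (intro Max_ge) auto
qed (rule edge_in_left_arc_mono[OF edge_in_left_arc_lam_pos])

lemma edge_in_right_arc_iff: "t < n \<Longrightarrow> edge_in_right_arc t \<longleftrightarrow> rho_pos \<le> t"
proof
  assume "t < n" "edge_in_right_arc t"
  then show "rho_pos \<le> t"
    unfolding rho_pos_def by (intro Min_le) auto
qed (rule edge_in_right_arc_mono[OF edge_in_right_arc_rho_pos])

lemma lam_rho_pos_bounds:
  "r \<le> lam_pos" "lam_pos + r \<le> n + 1" "r \<le> rho_pos + 1" "rho_pos + r \<le> n" "rho_pos \<le> lam_pos"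
proof -
  obtain t where t: "r \<le> t" "t \<le> n - r" "edge_in_left_arc t" "edge_in_right_arc t"
    using edges_in_both_arcs by blast
  then have "t < n"
    using r_ge_2 by linarith
  then have "rho_pos \<le> t" "t \<le> lam_pos"
    using t edge_in_left_arc_iff edge_in_right_arc_iff by blast+
  then show "r \<le> lam_pos" "rho_pos + r \<le> n" "rho_pos \<le> lam_pos"
    using t(1,2) by arith+
  show "lam_pos + r \<le> n + 1"
    using edge_in_left_arc_bound[OF edge_in_left_arc_lam_pos] \<open>r \<le> lam_pos\<close> r_ge_2 by linarith
  show "r \<le> rho_pos + 1"
    using edge_in_right_arc_bound[OF edge_in_right_arc_rho_pos] .
qed

lemma edge_through_in_carc_to_iff:
  assumes "u < n"
  shows "(\<exists>h\<in>H. i \<in> h \<and> h \<subseteq> carc n u i) \<longleftrightarrow> 1 \<le> pos u \<and> pos u \<le> lam_pos"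
proof (cases "u = i")
  case True
  have "\<not> edge_in_right_arc 0"
    using edge_in_right_arc_bound r_ge_2 by fastforce
  then show ?thesis
    using True i_less cw_dist_self[of n i]
    by (auto simp: subset_carc_from_iff edge_in_right_arc_def)
next
  case False
  then have "1 \<le> pos u" "u = (i + pos u) mod n"
    using assms pos_eq_0_iff[of u] add_cw_dist_mod[OF i_less assms] by auto
  then have "h \<subseteq> carc n u i \<longleftrightarrow> (\<forall>y\<in>h. y = i \<or> pos u \<le> pos y)" if "h \<in> H" for h
    using subset_carc_to_iff[OF that \<open>1 \<le> pos u\<close> pos_less] by simp
  then show ?thesis
    using \<open>1 \<le> pos u\<close> edge_in_left_arc_iff[OF pos_less] by (auto simp: edge_in_left_arc_def)
qed

lemma edge_through_in_carc_from_iff: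
  "u < n \<Longrightarrow> (\<exists>h\<in>H. i \<in> h \<and> h \<subseteq> carc n i u) \<longleftrightarrow> rho_pos \<le> pos u"
  using edge_in_right_arc_iff[OF pos_less] by (auto simp: subset_carc_from_iff edge_in_right_arc_def)

lemma lam_eq: "lam n H i = (i + lam_pos) mod n"
  unfolding lam_def using lam_rho_pos_bounds r_ge_2
  by (intro The_last_in_cw_range i_less edge_through_in_carc_to_iff) auto

lemma rho_eq: "rho n H i = (i + rho_pos) mod n"
  unfolding rho_def using lam_rho_pos_bounds r_ge_2
  by (intro The_first_in_cw_range i_less edge_through_in_carc_from_iff) auto

lemma pos_lam: "pos (lam n H i) = lam_pos"
  and rho_less: "rho n H i < n" and pos_rho: "pos (rho n H i) = rho_pos"
  using lam_rho_pos_bounds r_ge_2 i_less pos_shift by (simp_all add: lam_eq rho_eq)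

lemma pierces_between:
  assumes "rho_pos \<le> t" "t \<le> lam_pos"
  shows "pierces t"
  unfolding pierces_def
proof (intro ballI impI conjI)
  fix g assume g: "g \<in> H" "i \<notin> g"
  have bounds: "1 \<le> rho_pos" "rho_pos < n" "1 \<le> lam_pos" "lam_pos < n"
    using lam_rho_pos_bounds r_ge_2 by linarith+
  obtain hL hR where hL: "hL \<in> H" "i \<in> hL" "\<forall>y\<in>hL. y = i \<or> lam_pos \<le> pos y"
    and hR: "hR \<in> H" "i \<in> hR" "\<forall>y\<in>hR. pos y \<le> rho_pos"
    using edge_in_left_arc_lam_pos edge_in_right_arc_rho_pos
    unfolding edge_in_left_arc_def edge_in_right_arc_def by blast
  have "pos ((i + lam_pos) mod n) = lam_pos" "pos ((i + rho_pos) mod n) = rho_pos"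
    using pos_shift bounds by simp_all
  then have ends: "(i + lam_pos) mod n \<noteq> i" "i \<noteq> (i + rho_pos) mod n"
      "(i + lam_pos) mod n < n" "(i + rho_pos) mod n < n"
    using bounds cw_dist_self[of n i] i_less by auto
  show "\<exists>a\<in>g. pos a \<le> t"
  proof (rule ccontr)
    assume "\<not> ?thesis"
    then have "g \<inter> carc n i ((i + rho_pos) mod n) = {}"
      using assms(1) i_less mem_carc_iff[of i n] pos_shift[of rho_pos] bounds by fastforce
    moreover have "hR \<subseteq> carc n i ((i + rho_pos) mod n)"
      using subset_carc_from_iff[OF hR(1) ends(4)] hR(3) pos_shift[of rho_pos] bounds by simp
    ultimately show False
      using no_M1[OF hR(1) g(1) i_less ends(4,2)] by blast
  qed
  show "\<exists>b\<in>g. t \<le> pos b"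
  proof (rule ccontr)
    assume "\<not> ?thesis"
    then have "g \<inter> carc n ((i + lam_pos) mod n) i = {}"
      using assms(2) g(2) mem_carc_to[OF i_less bounds(3,4)] by fastforce
    moreover have "hL \<subseteq> carc n ((i + lam_pos) mod n) i"
      using subset_carc_to_iff[OF hL(1) bounds(3,4)] hL(3) by simp
    ultimately show False
      using no_M1[OF hL(1) g(1) ends(3) i_less ends(1)] by blast
  qed
qed

lemma r_set_in_H_if_through_between:
  assumes "j < n" "rho_pos \<le> pos j" "pos j \<le> lam_pos" "e \<in> r_sets n r" "{i, j} \<subseteq> e"
  shows "e \<in> H"
proof -
  have "j \<noteq> i"
    using assms(2) lam_rho_pos_bounds(3) r_ge_2 cw_dist_self[of n i] by auto
  moreover have "finite e" "e \<subseteq> {..<n}" "card e = r"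
    using assms(4) by (auto simp: r_sets_def intro: finite_subset)
  ultimately have "e - {i} \<subseteq> {..<n}" "i \<notin> e - {i}" "card (e - {i}) = r - 1" "j \<in> e - {i}"
    using assms(5) by auto
  then have "insert i (e - {i}) \<in> H"
    using insert_in_H_if_pierces pierces_between[OF assms(2,3)] by blast
  then show ?thesis
    using assms(5) by (simp add: insert_absorb)
qed

lemma vertex_in_edge: "\<exists>h\<in>H. i \<in> h"
  using edge_in_left_arc_lam_pos by (auto simp: edge_in_left_arc_def)

lemma lam_outside_carc: "lam n H i \<notin> carc n ((i + n + 2 - r) mod n) ((i + r - 1) mod n)"
proof -
  have eqs: "i + n + 2 - r = i + n - (r - 2)" "i + r - 1 = i + (r - 1)" "r - 2 + (r - 1) < n"
    using r_ge_2 n_ge by auto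
  show ?thesis
    unfolding eqs(1,2) mem_carc_around[OF i_less eqs(3)] using lam_rho_pos_bounds r_ge_2 pos_lam by auto
qed

lemma rho_outside_carc: "rho n H i \<notin> carc n ((i + n + 1 - r) mod n) ((i + r - 2) mod n)"
proof -
  have eqs: "i + n + 1 - r = i + n - (r - 1)" "i + r - 2 = i + (r - 2)" "r - 1 + (r - 2) < n"
    using r_ge_2 n_ge by auto
  show ?thesis
    unfolding eqs(1,2) mem_carc_around[OF i_less eqs(3)] using lam_rho_pos_bounds r_ge_2 pos_rho by auto
qed

lemma lam_ne: "lam n H i \<noteq> i" and rho_ne: "rho n H i \<noteq> i"
  and rho_in_ocarc_lam: "rho n H i \<in> ocarc n i (lam n H i)"
proof -
  have bounds: "1 \<le> rho_pos" "rho_pos \<le> lam_pos"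
    using lam_rho_pos_bounds r_ge_2 by linarith+
  then show "lam n H i \<noteq> i" "rho n H i \<noteq> i"
    using pos_lam pos_rho cw_dist_self[of n i] by auto
  then show "rho n H i \<in> ocarc n i (lam n H i)"
    using bounds pos_lam pos_rho rho_less i_less by (simp add: ocarc_def mem_carc_iff)
qed

lemma edges_through_rho_lam_arc:
  assumes "j < n" "j \<in> carc n (rho n H i) (lam n H i)" "e \<in> r_sets n r" "{i, j} \<subseteq> e"
  shows "e \<in> H"
proof -
  have "rho_pos \<le> lam_pos" "lam_pos < n"
    using lam_rho_pos_bounds r_ge_2 by linarith+
  then have "rho_pos \<le> pos j" "pos j \<le> lam_pos"
    using assms(2) mem_carc_between[OF i_less] by (auto simp: lam_eq rho_eq)
  then show ?thesis
    using r_set_in_H_if_through_between assms by blast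
qed

end

theorem proposition3p4:
  fixes n r :: nat and H :: "nat set set"
  assumes "r \<ge> 2" and "n \<ge> 2 * r" and "M1_saturated n r H"
  shows "(\<forall>i<n. \<exists>h\<in>H. i \<in> h)
    \<and> (\<forall>i<n. lam n H i \<notin> carc n ((i + n + 2 - r) mod n) ((i + r - 1) mod n)
             \<and> rho n H i \<notin> carc n ((i + n + 1 - r) mod n) ((i + r - 2) mod n))
    \<and> (\<forall>i<n. rho n H i \<in> ocarc n i (lam n H i) \<and> rho n H i \<noteq> i \<and> lam n H i \<noteq> i)
    \<and> (\<forall>i<n. \<forall>j<n. j \<in> carc n (rho n H i) (lam n H i) \<longrightarrow>
          (\<forall>e \<in> r_sets n r. {i, j} \<subseteq> e \<longrightarrow> e \<in> H))"
proof -
  have vertex: "saturated_vertex n r H i" if "i < n" for i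
    using assms that by unfold_locales auto
  show ?thesis
    using saturated_vertex.vertex_in_edge[OF vertex] saturated_vertex.lam_outside_carc[OF vertex]
      saturated_vertex.rho_outside_carc[OF vertex] saturated_vertex.rho_in_ocarc_lam[OF vertex]
      saturated_vertex.rho_ne[OF vertex] saturated_vertex.lam_ne[OF vertex]
      saturated_vertex.edges_through_rho_lam_arc[OF vertex]
    by simp
qed

end
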